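(* Let $G,H$ be graphs with $H$ connected, let $b$ be a positive integer, and let $G^*$ be the $(H,b)$-core of $G$. If, in the $(1:b)$ Maker-Breaker vertex $H$-game (resp. the $(1:b)$ Client-Waiter vertex $H$-game), Breaker (resp. Waiter) has a winning strategy when the game is played on $G^*$, then Breaker (resp. Waiter) has a winning strategy when the game is played on $G$ (with the same player moving first).
   Context: Fix a graph $G$, a connected graph $H$ and a positive integer $b$. With respect to $G,H,b$: a bad vertex is a vertex of $G$ lying in no copy of $H$ in $G$; a bad edge is an edge of $G$ lying in no copy of $H$ in $G$; a bad set is a set $U\subseteq V(G)$ with $2\le|U|\le b+1$ such that no copy $\hat H$ of $H$ in $G$ satisfies $|V(\hat H)\cap U|=1$; a small component is a connected component of $G$ with at most $(b+1)(v(H)-1)$ vertices. A graph is $(H,b)$-stable if it contains no bad vertex, bad edge, bad set or small component (with respect to itself, $H$ and $b$). The $(H,b)$-core of $G$ is the union of all $(H,b)$-stable subgraphs of $G$. The $(1:b)$ Maker-Breaker vertex $H$-game on a graph: Maker claims one and Breaker $b$ previously unclaimed vertices per turn, alternately, until all are claimed; Maker wins iff the subgraph induced by his vertices contains a copy of $H$. The $(1:b)$ Client-Waiter vertex $H$-game: in each round Waiter offers $t$ free vertices with $1\le t\le b+1$, Client claims one and Waiter the rest; Client wins iff the subgraph induced by his vertices contains a copy of $H$, otherwise Waiter wins. *)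

theory Defs
  imports Main
begin

type_synonym 'a graph = "'a set \<times> 'a set set"

definition verts :: "'a graph \<Rightarrow> 'a set" where "verts G = fst G"
definition edges :: "'a graph \<Rightarrow> 'a set set" where "edges G = snd G"

definition graph :: "'a graph \<Rightarrow> bool" where
  "graph G \<longleftrightarrow> finite (verts G) \<and>
     (\<forall>e\<in>edges G. \<exists>x y. x \<noteq> y \<and> x \<in> verts G \<and> y \<in> verts G \<and> e = {x, y})"

definition adj :: "'a graph \<Rightarrow> 'a \<Rightarrow> 'a \<Rightarrow> bool" where
  "adj G x y \<longleftrightarrow> {x, y} \<in> edges G"

definition connected_graph :: "'a graph \<Rightarrow> bool" where
  "connected_graph G \<longleftrightarrow> verts G \<noteq> {} \<and>
     (\<forall>x\<in>verts G. \<forall>y\<in>verts G. (adj G)\<^sup>*\<^sup>* x y)"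

definition component :: "'a graph \<Rightarrow> 'a \<Rightarrow> 'a set" where
  "component G v = {u \<in> verts G. (adj G)\<^sup>*\<^sup>* v u}"

definition subgraph :: "'a graph \<Rightarrow> 'a graph \<Rightarrow> bool" where
  "subgraph G' G \<longleftrightarrow> graph G' \<and> verts G' \<subseteq> verts G \<and> edges G' \<subseteq> edges G"

text \<open>An embedding of H into G; its image (vertex set f ` V(H), edge set the images
  of the edges of H) is a copy of H in G, and every copy arises this way.\<close>
definition embedding :: "'b graph \<Rightarrow> 'a graph \<Rightarrow> ('b \<Rightarrow> 'a) \<Rightarrow> bool" where
  "embedding H G f \<longleftrightarrow> inj_on f (verts H) \<and> f ` verts H \<subseteq> verts G \<and>
     (\<forall>e\<in>edges H. f ` e \<in> edges G)"

definition bad_vertex :: "'b graph \<Rightarrow> 'a graph \<Rightarrow> 'a \<Rightarrow> bool" where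
  "bad_vertex H G v \<longleftrightarrow> v \<in> verts G \<and> \<not> (\<exists>f. embedding H G f \<and> v \<in> f ` verts H)"

definition bad_edge :: "'b graph \<Rightarrow> 'a graph \<Rightarrow> 'a set \<Rightarrow> bool" where
  "bad_edge H G e \<longleftrightarrow> e \<in> edges G \<and>
     \<not> (\<exists>f. embedding H G f \<and> e \<in> (\<lambda>d. f ` d) ` edges H)"

definition bad_set :: "'b graph \<Rightarrow> nat \<Rightarrow> 'a graph \<Rightarrow> 'a set \<Rightarrow> bool" where
  "bad_set H b G U \<longleftrightarrow> U \<subseteq> verts G \<and> 2 \<le> card U \<and> card U \<le> b + 1 \<and>
     \<not> (\<exists>f. embedding H G f \<and> card (f ` verts H \<inter> U) = 1)"

definition small_component :: "'b graph \<Rightarrow> nat \<Rightarrow> 'a graph \<Rightarrow> 'a set \<Rightarrow> bool" where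
  "small_component H b G C \<longleftrightarrow> (\<exists>v\<in>verts G. C = component G v) \<and>
     card C \<le> (b + 1) * (card (verts H) - 1)"

definition stable :: "'b graph \<Rightarrow> nat \<Rightarrow> 'a graph \<Rightarrow> bool" where
  "stable H b G \<longleftrightarrow> (\<nexists>v. bad_vertex H G v) \<and> (\<nexists>e. bad_edge H G e) \<and>
     (\<nexists>U. bad_set H b G U) \<and> (\<nexists>C. small_component H b G C)"

definition core :: "'b graph \<Rightarrow> nat \<Rightarrow> 'a graph \<Rightarrow> 'a graph" where
  "core H b G =
    (\<Union>{verts G' | G'. subgraph G' G \<and> stable H b G'},
     \<Union>{edges G' | G'. subgraph G' G \<and> stable H b G'})"

definition has_copy_in :: "'b graph \<Rightarrow> 'a graph \<Rightarrow> 'a set \<Rightarrow> bool" where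
  "has_copy_in H G M \<longleftrightarrow> (\<exists>f. embedding H G f \<and> f ` verts H \<subseteq> M)"

text \<open>Position: Maker's vertices M, free
  vertices F, and whether it is Maker's turn.\<close>
inductive mb_bwin :: "'b graph \<Rightarrow> nat \<Rightarrow> 'a graph \<Rightarrow> 'a set \<Rightarrow> 'a set \<Rightarrow> bool \<Rightarrow> bool"
  for H b G where
  finished: "F = {} \<Longrightarrow> \<not> has_copy_in H G M \<Longrightarrow> mb_bwin H b G M F t"
| maker_move: "F \<noteq> {} \<Longrightarrow> (\<forall>v\<in>F. mb_bwin H b G (insert v M) (F - {v}) False)
     \<Longrightarrow> mb_bwin H b G M F True"
| breaker_move: "F \<noteq> {} \<Longrightarrow> S \<subseteq> F \<Longrightarrow> card S = min b (card F)
     \<Longrightarrow> mb_bwin H b G M (F - S) True \<Longrightarrow> mb_bwin H b G M F False"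

definition MB_breaker_wins :: "'b graph \<Rightarrow> nat \<Rightarrow> 'a graph \<Rightarrow> bool \<Rightarrow> bool" where
  "MB_breaker_wins H b G maker_first = mb_bwin H b G {} (verts G) maker_first"

text \<open>Client-Waiter (1:b) vertex H-game: Waiter offers t free vertices, 1 <= t <= b+1,
  Client claims one of them and Waiter the rest. C = Client's vertices, F = free.\<close>
inductive cw_wwin :: "'b graph \<Rightarrow> nat \<Rightarrow> 'a graph \<Rightarrow> 'a set \<Rightarrow> 'a set \<Rightarrow> bool"
  for H b G where
  finished: "F = {} \<Longrightarrow> \<not> has_copy_in H G C \<Longrightarrow> cw_wwin H b G C F"
| round: "S \<subseteq> F \<Longrightarrow> 1 \<le> card S \<Longrightarrow> card S \<le> b + 1 \<Longrightarrow>
     (\<forall>v\<in>S. cw_wwin H b G (insert v C) (F - S)) \<Longrightarrow> cw_wwin H b G C F"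

definition CW_waiter_wins :: "'b graph \<Rightarrow> nat \<Rightarrow> 'a graph \<Rightarrow> bool" where
  "CW_waiter_wins H b G = cw_wwin H b G {} (verts G)"

end

theory Submission
  imports Defs
begin

text \<open>If G is not (H,b)-stable, deleting one of its bad vertices, bad edges, bad sets or small
  components leaves a smaller subgraph that still contains every stable subgraph, hence the core,
  so iterating ends at the core. It remains to lift a win on G - X to G for such a bad piece X.
  Breaker follows his strategy on G - X and answers each move of Maker inside X by b vertices of X;
  Waiter first offers X in batches of b + 1. Either way Maker (Client) ends with a set M satisfying
  |M \<inter> X| (b + 1) \<le> |X| + b, and then every copy of H inside M avoids X: a bad vertex or edge
  lies on no copy, a bad set U has |M \<inter> U| \<le> 1 while no copy meets U exactly once, and a
  connected copy meeting a small component would lie inside it, which is too small.\<close>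

lemma has_copy_in_mono: "has_copy_in H G M \<Longrightarrow> M \<subseteq> M' \<Longrightarrow> has_copy_in H G M'"
  unfolding has_copy_in_def by blast

lemma mb_bwin_no_copy: "mb_bwin H b G M F t \<Longrightarrow> \<not> has_copy_in H G M"
proof (induction rule: mb_bwin.induct)
  case (maker_move F M)
  then obtain v where "v \<in> F" by blast
  with maker_move.IH show ?case using has_copy_in_mono[of H G M "insert v M"] by blast
qed simp_all

lemma mb_bwin_maker_turn:
  "mb_bwin H b G M F True \<Longrightarrow> v \<in> F \<Longrightarrow> mb_bwin H b G (insert v M) (F - {v}) False"
  by (auto elim: mb_bwin.cases)

lemma mb_bwin_breaker_turn:
  assumes "mb_bwin H b G M F False"
  obtains S where "S \<subseteq> F" "card S = min b (card F)" "mb_bwin H b G M (F - S) True"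
  using assms
proof (cases rule: mb_bwin.cases)
  case finished
  then show thesis using that[of "{}"] by (simp add: mb_bwin.finished)
qed blast

lemma mb_bwin_subset_free:
  "mb_bwin H b G M F t \<Longrightarrow> finite F \<Longrightarrow> F' \<subseteq> F \<Longrightarrow> mb_bwin H b G M F' t"
proof (induction arbitrary: F' rule: mb_bwin.induct)
  case (finished F M t)
  then show ?case by (simp add: mb_bwin.finished)
next
  case (maker_move F M)
  show ?case
  proof (cases "F' = {}")
    case True
    have "mb_bwin H b G (insert v M) (F - {v}) False" if "v \<in> F" for v
      using maker_move.IH that by blast
    then have "\<not> has_copy_in H G M"
      using mb_bwin_no_copy[OF mb_bwin.maker_move[OF maker_move.hyps(1)]] by blast
    then show ?thesis using True by (simp add: mb_bwin.finished)
  next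
    case False
    have "mb_bwin H b G (insert v M) (F' - {v}) False" if "v \<in> F'" for v
    proof -
      have "v \<in> F" "F' - {v} \<subseteq> F - {v}" using maker_move.prems(2) that by auto
      then show ?thesis using maker_move.IH maker_move.prems(1) by simp
    qed
    then show ?thesis using mb_bwin.maker_move[OF False] by blast
  qed
next
  case (breaker_move F S M)
  show ?case
  proof (cases "F' = {}")
    case True
    have "\<not> has_copy_in H G M"
      using mb_bwin_no_copy[OF mb_bwin.breaker_move[OF breaker_move.hyps]] .
    then show ?thesis using True by (simp add: mb_bwin.finished)
  next
    case False
    have "finite F'" using breaker_move.prems finite_subset by blast
    moreover have "card (F' \<inter> S) \<le> min b (card F')"
    proof -
      have "finite S" using breaker_move.hyps(2) breaker_move.prems(1) finite_subset by blast
      then have "card (F' \<inter> S) \<le> card S" by (simp add: card_mono)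
      moreover have "card (F' \<inter> S) \<le> card F'" using \<open>finite F'\<close> by (simp add: card_mono)
      ultimately show ?thesis using breaker_move.hyps(3) by simp
    qed
    ultimately obtain S' where S': "F' \<inter> S \<subseteq> S'" "S' \<subseteq> F'" "card S' = min b (card F')"
      using exists_subset_between[of "F' \<inter> S" "min b (card F')" F'] by auto
    have "F' - S' \<subseteq> F - S" using breaker_move.prems(2) S'(1) by blast
    then have "mb_bwin H b G M (F' - S') True"
      using breaker_move.IH breaker_move.prems(1) by simp
    then show ?thesis by (rule mb_bwin.breaker_move[OF False S'(2,3)])
  qed
qed

section \<open>Lifting winning strategies past a removed vertex set\<close>

lemma card_Diff_Diff_subset:
  assumes "finite X" "S \<subseteq> F \<inter> X"
  shows "card (X - (F - S)) = card (X - F) + card S"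
proof -
  have "X - (F - S) = (X - F) \<union> S" "(X - F) \<inter> S = {}" using assms(2) by auto
  moreover have "finite S" using assms finite_subset by blast
  ultimately show ?thesis using assms(1) by (simp add: card_Un_disjoint)
qed

text \<open>With F the free vertices, X - F is the part of X claimed so far; M owns at most a 1/(b+1)
  share of it, up to a slack of b for a round in progress.\<close>

definition small_share :: "'a set \<Rightarrow> nat \<Rightarrow> 'a set \<Rightarrow> 'a set \<Rightarrow> bool" where
  "small_share X b M F \<longleftrightarrow> card (M \<inter> X) * (b + 1) \<le> card (X - F) + b"

definition balanced_share :: "'a set \<Rightarrow> nat \<Rightarrow> 'a set \<Rightarrow> 'a set \<Rightarrow> bool" where
  "balanced_share X b M F \<longleftrightarrow> small_share X b M F \<and>
     (F \<inter> X \<noteq> {} \<longrightarrow> card (M \<inter> X) * (b + 1) \<le> card (X - F))"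

lemma balanced_share_Diff:
  assumes "finite X" "balanced_share X b M F"
  shows "balanced_share X b M (F - S)"
proof -
  have "card (X - F) \<le> card (X - (F - S))" using assms(1) by (intro card_mono) auto
  then show ?thesis using assms(2) unfolding balanced_share_def small_share_def by auto
qed

lemma balanced_share_claim_outside:
  assumes "v \<notin> X" "balanced_share X b M F"
  shows "balanced_share X b (insert v M) (F - {v})"
proof -
  have "insert v M \<inter> X = M \<inter> X" "X - (F - {v}) = X - F" "(F - {v}) \<inter> X = F \<inter> X"
    using assms(1) by auto
  then show ?thesis using assms(2) unfolding balanced_share_def small_share_def by simp
qed

lemma small_share_claim_inside:
  assumes "finite X" "v \<in> F \<inter> X" "v \<notin> M" "balanced_share X b M F"
  shows "small_share X b (insert v M) (F - {v})"
proof -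
  have "card (insert v M \<inter> X) = card (M \<inter> X) + 1" using assms(1-3) by simp
  moreover have "card (X - (F - {v})) = card (X - F) + 1"
    using card_Diff_Diff_subset[of X "{v}" F] assms(1,2) by simp
  moreover have "card (M \<inter> X) * (b + 1) \<le> card (X - F)"
    using assms(2,4) unfolding balanced_share_def by blast
  ultimately show ?thesis unfolding small_share_def by simp
qed

lemma balanced_share_answer_inside:
  assumes "finite X" "S \<subseteq> F \<inter> X" "card S = b" "small_share X b M F"
  shows "balanced_share X b M (F - S)"
  using assms card_Diff_Diff_subset[OF assms(1,2)]
  unfolding balanced_share_def small_share_def by simp

lemma balanced_share_exhaust:
  assumes "finite X" "F \<inter> X \<subseteq> S" "small_share X b M F"
  shows "balanced_share X b M (F - S)"
proof -
  have "card (X - F) \<le> card (X - (F - S))" using assms(1) by (intro card_mono) auto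
  moreover have "(F - S) \<inter> X = {}" using assms(2) by blast
  ultimately show ?thesis using assms(3) unfolding balanced_share_def small_share_def by simp
qed

lemma balanced_share_offer:
  assumes "finite X" "balanced_share X b C F" "S \<subseteq> F \<inter> X"
    and "card S = min (b + 1) (card (F \<inter> X))" "v \<in> S" "v \<notin> C"
  shows "balanced_share X b (insert v C) (F - S)"
proof -
  have "F \<inter> X \<noteq> {}" using assms(3,5) by blast
  then have old: "card (C \<inter> X) * (b + 1) \<le> card (X - F)"
    using assms(2) unfolding balanced_share_def by blast
  have new: "card (insert v C \<inter> X) * (b + 1) = card (C \<inter> X) * (b + 1) + (b + 1)"
    using assms(1,3,5,6) by auto
  have claimed: "card (X - (F - S)) = card (X - F) + card S"
    using card_Diff_Diff_subset[OF assms(1,3)] .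
  have "finite S" using assms(1,3) finite_subset by blast
  then have "card S \<ge> 1" using assms(5) by (auto simp: Suc_le_eq card_gt_0_iff)
  moreover have "card S = b + 1" if "(F - S) \<inter> X \<noteq> {}"
  proof -
    have "S \<subset> F \<inter> X" using that assms(3) by blast
    then have "card S < card (F \<inter> X)" using assms(1) by (simp add: psubset_card_mono)
    then show ?thesis using assms(4) by simp
  qed
  ultimately show ?thesis
    using old new claimed unfolding balanced_share_def small_share_def by auto
qed

text \<open>The bound on M \<inter> X is exactly what Breaker, or Waiter, can enforce on X by claiming
  b of every b + 1 of its vertices.\<close>

definition safe_removal :: "'b graph \<Rightarrow> nat \<Rightarrow> 'a graph \<Rightarrow> 'a set \<Rightarrow> 'a graph \<Rightarrow> bool" where
  "safe_removal H b G X G' \<longleftrightarrow> X \<subseteq> verts G \<and> verts G' = verts G - X \<and>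
     (\<forall>M. card (M \<inter> X) * (b + 1) \<le> card X + b \<longrightarrow> has_copy_in H G M
        \<longrightarrow> has_copy_in H G' (M \<inter> verts G'))"

text \<open>Breaker's position on G shadows a winning position of his on G'. In the second case
  Maker has just claimed a vertex of X, and Breaker answers inside X before resuming
  his strategy on G'.\<close>

definition mb_shadow :: "'b graph \<Rightarrow> nat \<Rightarrow> 'a graph \<Rightarrow> 'a set \<Rightarrow> 'a set \<Rightarrow> 'a set \<Rightarrow> bool \<Rightarrow> bool"
  where
  "mb_shadow H b G' X M F t \<longleftrightarrow>
     (balanced_share X b M F \<and> mb_bwin H b G' (M \<inter> verts G') (F \<inter> verts G') t)
   \<or> (\<not> t \<and> small_share X b M F \<and> mb_bwin H b G' (M \<inter> verts G') (F \<inter> verts G') True)"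

lemma mb_shadow_final:
  assumes "safe_removal H b G X G'" "mb_shadow H b G' X M {} t"
  shows "\<not> has_copy_in H G M"
proof -
  have "card (M \<inter> X) * (b + 1) \<le> card X + b"
    using assms(2) unfolding mb_shadow_def balanced_share_def small_share_def by auto
  moreover have "\<not> has_copy_in H G' (M \<inter> verts G')"
    using assms(2) unfolding mb_shadow_def by (blast dest: mb_bwin_no_copy)
  ultimately show ?thesis using assms(1) unfolding safe_removal_def by blast
qed

lemma mb_shadow_maker_move:
  assumes removal: "safe_removal H b G X G'" and fin: "finite (verts G)"
    and "F \<subseteq> verts G" "v \<in> F" "v \<notin> M" and shadow: "mb_shadow H b G' X M F True"
  shows "mb_shadow H b G' X (insert v M) (F - {v}) False"
proof -
  have V': "verts G' = verts G - X" and "finite X"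
    using removal fin finite_subset unfolding safe_removal_def by auto
  have bal: "balanced_share X b M F"
    and W: "mb_bwin H b G' (M \<inter> verts G') (F \<inter> verts G') True"
    using shadow unfolding mb_shadow_def by auto
  show ?thesis
  proof (cases "v \<in> verts G'")
    case True
    have "mb_bwin H b G' (insert v (M \<inter> verts G')) (F \<inter> verts G' - {v}) False"
      using mb_bwin_maker_turn[OF W] True \<open>v \<in> F\<close> by blast
    moreover have "insert v M \<inter> verts G' = insert v (M \<inter> verts G')"
      "(F - {v}) \<inter> verts G' = F \<inter> verts G' - {v}" using True by auto
    moreover have "balanced_share X b (insert v M) (F - {v})"
      using balanced_share_claim_outside[OF _ bal] True V' by blast
    ultimately show ?thesis unfolding mb_shadow_def by simp
  next
    case False
    then have "v \<in> F \<inter> X" using assms(3,4) V' by blast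
    then have "small_share X b (insert v M) (F - {v})"
      using small_share_claim_inside[OF \<open>finite X\<close> _ \<open>v \<notin> M\<close> bal] by blast
    moreover have "insert v M \<inter> verts G' = M \<inter> verts G'" "(F - {v}) \<inter> verts G' = F \<inter> verts G'"
      using False by auto
    ultimately show ?thesis using W unfolding mb_shadow_def by simp
  qed
qed

lemma card_split_safe_removal:
  assumes "safe_removal H b G X G'" "finite F" "F \<subseteq> verts G"
  shows "card F = card (F \<inter> verts G') + card (F \<inter> X)"
proof -
  have "F = (F \<inter> verts G') \<union> (F \<inter> X)" "(F \<inter> verts G') \<inter> (F \<inter> X) = {}"
    using assms(1,3) unfolding safe_removal_def by blast+
  then show ?thesis using assms(2) by (metis card_Un_disjoint finite_Int)
qed

lemma mb_shadow_breaker_follows: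
  assumes removal: "safe_removal H b G X G'" and fin: "finite (verts G)" and F: "F \<subseteq> verts G"
    and bal: "balanced_share X b M F" and W: "mb_bwin H b G' (M \<inter> verts G') (F \<inter> verts G') False"
  obtains S where "S \<subseteq> F" "card S = min b (card F)" "mb_shadow H b G' X M (F - S) True"
proof -
  have V': "verts G' = verts G - X" and "finite F" "finite X"
    using removal F fin finite_subset unfolding safe_removal_def by auto
  obtain S' where S': "S' \<subseteq> F \<inter> verts G'" "card S' = min b (card (F \<inter> verts G'))"
    "mb_bwin H b G' (M \<inter> verts G') (F \<inter> verts G' - S') True"
    using mb_bwin_breaker_turn[OF W] by blast
  have "finite S'" using S'(1) \<open>finite F\<close> finite_subset by blast
  have "S' \<inter> (F \<inter> X) = {}" using S'(1) V' by blast
  then have "card (S' \<union> F \<inter> X) = card S' + card (F \<inter> X)"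
    using \<open>finite S'\<close> \<open>finite F\<close> by (simp add: card_Un_disjoint)
  moreover have "card S' \<le> min b (card F)" "min b (card F) \<le> card S' + card (F \<inter> X)"
    using S'(2) card_split_safe_removal[OF removal \<open>finite F\<close> F] by simp_all
  ultimately obtain S where S: "S' \<subseteq> S" "S \<subseteq> S' \<union> F \<inter> X" "card S = min b (card F)"
    using exists_subset_between[of S' "min b (card F)" "S' \<union> F \<inter> X"]
      \<open>finite F\<close> \<open>finite S'\<close> by (metis finite_Int finite_UnI le_sup_iff order_refl)
  have "(F - S) \<inter> verts G' = F \<inter> verts G' - S'" using S(1,2) V' by blast
  then have "mb_shadow H b G' X M (F - S) True"
    using S'(3) balanced_share_Diff[OF \<open>finite X\<close> bal] unfolding mb_shadow_def by simp
  then show thesis using that S S'(1) by blast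
qed

lemma mb_shadow_breaker_answers:
  assumes removal: "safe_removal H b G X G'" and fin: "finite (verts G)" and F: "F \<subseteq> verts G"
    and share: "small_share X b M F" and W: "mb_bwin H b G' (M \<inter> verts G') (F \<inter> verts G') True"
  obtains S where "S \<subseteq> F" "card S = min b (card F)" "mb_shadow H b G' X M (F - S) True"
proof -
  have V': "verts G' = verts G - X" and "finite F" "finite X"
    using removal F fin finite_subset unfolding safe_removal_def by auto
  note split = card_split_safe_removal[OF removal \<open>finite F\<close> F]
  show thesis
  proof (cases "b \<le> card (F \<inter> X)")
    case True
    then obtain S where S: "S \<subseteq> F \<inter> X" "card S = b" by (meson obtain_subset_with_card_n)
    have "(F - S) \<inter> verts G' = F \<inter> verts G'" using S(1) V' by blast
    then have "mb_shadow H b G' X M (F - S) True"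
      using W balanced_share_answer_inside[OF \<open>finite X\<close> S share] unfolding mb_shadow_def by simp
    moreover have "card S = min b (card F)" using S(2) True split by simp
    ultimately show thesis using that S(1) by blast
  next
    case False
    then have "card (F \<inter> X) \<le> min b (card F)" using split by simp
    then obtain S where S: "F \<inter> X \<subseteq> S" "S \<subseteq> F" "card S = min b (card F)"
      using exists_subset_between[of "F \<inter> X" "min b (card F)" F] \<open>finite F\<close> by auto
    have "finite (F \<inter> verts G')" "(F - S) \<inter> verts G' \<subseteq> F \<inter> verts G'"
      using \<open>finite F\<close> by auto
    then have "mb_bwin H b G' (M \<inter> verts G') ((F - S) \<inter> verts G') True"
      by (rule mb_bwin_subset_free[OF W])
    then have "mb_shadow H b G' X M (F - S) True"
      using balanced_share_exhaust[OF \<open>finite X\<close> S(1) share] unfolding mb_shadow_def by simp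
    then show thesis using that S(2,3) by blast
  qed
qed

lemma mb_shadow_breaker_move:
  assumes "safe_removal H b G X G'" "finite (verts G)" "F \<subseteq> verts G"
    and "mb_shadow H b G' X M F False"
  obtains S where "S \<subseteq> F" "card S = min b (card F)" "mb_shadow H b G' X M (F - S) True"
  using assms(4) mb_shadow_breaker_follows[OF assms(1-3)] mb_shadow_breaker_answers[OF assms(1-3)]
  unfolding mb_shadow_def by blast

lemma mb_bwin_of_shadow:
  assumes removal: "safe_removal H b G X G'" and fin: "finite (verts G)" and "b \<ge> 1"
  shows "F \<subseteq> verts G \<Longrightarrow> M \<inter> F = {} \<Longrightarrow> mb_shadow H b G' X M F t \<Longrightarrow> mb_bwin H b G M F t"
proof (induction "card F" arbitrary: M F t rule: less_induct)
  case less
  have "finite F" using less.prems(1) fin finite_subset by blast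
  show ?case
  proof (cases "F = {}")
    case True
    then show ?thesis
      using mb_shadow_final[OF removal] less.prems(3) by (simp add: mb_bwin.finished)
  next
    case nonempty: False
    show ?thesis
    proof (cases t)
      case True
      have "mb_bwin H b G (insert v M) (F - {v}) False" if "v \<in> F" for v
      proof -
        have "v \<notin> M" using that less.prems(2) by blast
        then have "mb_shadow H b G' X (insert v M) (F - {v}) False"
          using mb_shadow_maker_move[OF removal fin less.prems(1) that] less.prems(3) True by simp
        moreover have "card (F - {v}) < card F" using card_Diff1_less[OF \<open>finite F\<close> that] .
        moreover have "F - {v} \<subseteq> verts G" "insert v M \<inter> (F - {v}) = {}"
          using less.prems(1,2) by auto
        ultimately show ?thesis using less.hyps by blast
      qed
      then have "mb_bwin H b G M F True" by (blast intro: mb_bwin.maker_move[OF nonempty])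
      then show ?thesis using True by simp
    next
      case False
      obtain S where S: "S \<subseteq> F" "card S = min b (card F)" "mb_shadow H b G' X M (F - S) True"
        using mb_shadow_breaker_move[OF removal fin less.prems(1)] less.prems(3) False by auto
      have "finite S" using S(1) \<open>finite F\<close> finite_subset by blast
      have "card S \<ge> 1"
        using S(2) \<open>b \<ge> 1\<close> nonempty \<open>finite F\<close> by (simp add: Suc_le_eq card_gt_0_iff)
      then have "card (F - S) < card F"
      proof -
        have "card F > 0" using \<open>finite F\<close> nonempty by (simp add: card_gt_0_iff)
        then show ?thesis using \<open>card S \<ge> 1\<close> S(1) \<open>finite S\<close> by (simp add: card_Diff_subset)
      qed
      moreover have "F - S \<subseteq> verts G" "M \<inter> (F - S) = {}" using less.prems(1,2) by auto
      ultimately have "mb_bwin H b G M (F - S) True" using less.hyps S(3) by blast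
      then show ?thesis using mb_bwin.breaker_move[OF nonempty S(1,2)] False by simp
    qed
  qed
qed

lemma mb_bwin_lift:
  assumes "safe_removal H b G X G'" "finite (verts G)" "b \<ge> 1"
    and "mb_bwin H b G' {} (verts G') t"
  shows "mb_bwin H b G {} (verts G) t"
proof (rule mb_bwin_of_shadow[OF assms(1-3)])
  have "verts G \<inter> verts G' = verts G'" using assms(1) unfolding safe_removal_def by blast
  then show "mb_shadow H b G' X {} (verts G) t"
    using assms(4) unfolding mb_shadow_def balanced_share_def small_share_def by simp
qed auto

lemma cw_wwin_follow_remainder:
  assumes removal: "safe_removal H b G X G'"
  shows "cw_wwin H b G' C' F \<Longrightarrow> C' = C \<inter> verts G' \<Longrightarrow> F \<subseteq> verts G'
    \<Longrightarrow> card (C \<inter> X) * (b + 1) \<le> card X + b \<Longrightarrow> cw_wwin H b G C F"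
proof (induction arbitrary: C rule: cw_wwin.induct)
  case (finished F C')
  then have "\<not> has_copy_in H G C" using removal unfolding safe_removal_def by blast
  then show ?case using finished(1) by (simp add: cw_wwin.finished)
next
  case (round S F C')
  have "cw_wwin H b G (insert v C) (F - S)" if "v \<in> S" for v
  proof -
    have "v \<in> verts G'" "v \<notin> X" using that round.hyps(1) round.prems(2) removal
      unfolding safe_removal_def by auto
    then have "insert v C' = insert v C \<inter> verts G'" "card (insert v C \<inter> X) * (b + 1) \<le> card X + b"
      using round.prems(1,3) by auto
    moreover have "F - S \<subseteq> verts G'" using round.prems(2) by blast
    ultimately show ?thesis using round.IH that by blast
  qed
  then show ?case using cw_wwin.round[OF round.hyps(1-3)] by blast
qed

lemma cw_wwin_offer_removed_first:
  assumes removal: "safe_removal H b G X G'" and fin: "finite (verts G)"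
    and W: "cw_wwin H b G' {} (verts G')"
  shows "C \<subseteq> X \<Longrightarrow> C \<inter> F = {} \<Longrightarrow> F \<subseteq> verts G \<Longrightarrow> verts G' \<subseteq> F
    \<Longrightarrow> balanced_share X b C F \<Longrightarrow> cw_wwin H b G C F"
proof (induction "card (F \<inter> X)" arbitrary: C F rule: less_induct)
  case less
  have V': "verts G' = verts G - X" and "finite X"
    using removal fin finite_subset unfolding safe_removal_def by auto
  show ?case
  proof (cases "F \<inter> X = {}")
    case True
    then have "F = verts G'" using less.prems(3,4) V' by blast
    moreover have "C \<inter> verts G' = {}" using less.prems(1) V' by blast
    moreover have "X - F = X" using True by blast
    then have "card (C \<inter> X) * (b + 1) \<le> card X + b"
      using less.prems(5) unfolding balanced_share_def small_share_def by simp
    ultimately show ?thesis using cw_wwin_follow_remainder[OF removal W] by simp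
  next
    case False
    have "min (b + 1) (card (F \<inter> X)) \<le> card (F \<inter> X)" by simp
    then obtain S where S: "S \<subseteq> F \<inter> X" "card S = min (b + 1) (card (F \<inter> X))" "finite S"
      by (rule obtain_subset_with_card_n)
    have "card S \<ge> 1" using S(2) False \<open>finite X\<close> by (simp add: Suc_le_eq card_gt_0_iff)
    have "cw_wwin H b G (insert v C) (F - S)" if "v \<in> S" for v
    proof (rule less.hyps)
      have "(F - S) \<inter> X = F \<inter> X - S" by blast
      moreover have "card (F \<inter> X) > 0" using False \<open>finite X\<close> by (simp add: card_gt_0_iff)
      ultimately show "card ((F - S) \<inter> X) < card (F \<inter> X)"
        using S(1,3) \<open>card S \<ge> 1\<close> by (simp add: card_Diff_subset)
      have "v \<notin> C" using that S(1) less.prems(2) by blast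
      then show "balanced_share X b (insert v C) (F - S)"
        using balanced_share_offer[OF \<open>finite X\<close> less.prems(5) S(1,2) that] by blast
      show "insert v C \<subseteq> X" "insert v C \<inter> (F - S) = {}" "F - S \<subseteq> verts G"
        "verts G' \<subseteq> F - S"
        using that S(1) less.prems(1-4) V' by auto
    qed
    moreover have "S \<subseteq> F" "card S \<le> b + 1" using S(1,2) by auto
    ultimately show ?thesis using cw_wwin.round[of S F] \<open>card S \<ge> 1\<close> by blast
  qed
qed

lemma cw_wwin_lift:
  assumes "safe_removal H b G X G'" "finite (verts G)" "cw_wwin H b G' {} (verts G')"
  shows "cw_wwin H b G {} (verts G)"
proof (rule cw_wwin_offer_removed_first[OF assms])
  show "verts G' \<subseteq> verts G" using assms(1) unfolding safe_removal_def by blast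
  show "balanced_share X b {} (verts G)" unfolding balanced_share_def small_share_def by simp
qed auto

definition wins_transfer :: "'b graph \<Rightarrow> nat \<Rightarrow> 'a graph \<Rightarrow> 'a graph \<Rightarrow> bool" where
  "wins_transfer H b G' G \<longleftrightarrow>
     (\<forall>maker_first. MB_breaker_wins H b G' maker_first \<longrightarrow> MB_breaker_wins H b G maker_first)
     \<and> (CW_waiter_wins H b G' \<longrightarrow> CW_waiter_wins H b G)"

lemma wins_transfer_safe_removal:
  "safe_removal H b G X G' \<Longrightarrow> finite (verts G) \<Longrightarrow> b \<ge> 1 \<Longrightarrow> wins_transfer H b G' G"
  unfolding wins_transfer_def MB_breaker_wins_def CW_waiter_wins_def
  using mb_bwin_lift cw_wwin_lift by blast

definition delete_vertices :: "'a graph \<Rightarrow> 'a set \<Rightarrow> 'a graph" where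
  "delete_vertices G X = (verts G - X, {e \<in> edges G. e \<inter> X = {}})"

definition delete_edge :: "'a graph \<Rightarrow> 'a set \<Rightarrow> 'a graph" where
  "delete_edge G e = (verts G, edges G - {e})"

lemma verts_delete_vertices [simp]: "verts (delete_vertices G X) = verts G - X"
  by (simp add: delete_vertices_def verts_def)

lemma edges_delete_vertices [simp]: "edges (delete_vertices G X) = {e \<in> edges G. e \<inter> X = {}}"
  by (simp add: delete_vertices_def edges_def)

lemma verts_delete_edge [simp]: "verts (delete_edge G e) = verts G"
  by (simp add: delete_edge_def verts_def)

lemma edges_delete_edge [simp]: "edges (delete_edge G e) = edges G - {e}"
  by (simp add: delete_edge_def edges_def)

definition graph_size :: "'a graph \<Rightarrow> nat" where
  "graph_size G = card (verts G) + card (edges G)"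

lemma graph_edge_subset: "graph G \<Longrightarrow> e \<in> edges G \<Longrightarrow> e \<subseteq> verts G"
  unfolding graph_def by fast

lemma graph_finite_edges: "graph G \<Longrightarrow> finite (edges G)"
proof -
  assume G: "graph G"
  then have "edges G \<subseteq> Pow (verts G)" using graph_edge_subset by blast
  moreover have "finite (verts G)" using G unfolding graph_def by blast
  ultimately show ?thesis by (simp add: finite_subset)
qed

lemma subgraph_refl: "graph G \<Longrightarrow> subgraph G G"
  unfolding subgraph_def by blast

lemma subgraph_trans: "subgraph G1 G2 \<Longrightarrow> subgraph G2 G3 \<Longrightarrow> subgraph G1 G3"
  unfolding subgraph_def by blast

lemma graph_delete_vertices:
  assumes "graph G"
  shows "graph (delete_vertices G X)"
  unfolding graph_def
proof (intro conjI ballI)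
  show "finite (verts (delete_vertices G X))" using assms unfolding graph_def by simp
  fix e assume "e \<in> edges (delete_vertices G X)"
  then have e: "e \<in> edges G" "e \<inter> X = {}" by simp_all
  then obtain x y where "x \<noteq> y" "x \<in> verts G" "y \<in> verts G" "e = {x, y}"
    using assms unfolding graph_def by meson
  with e(2) show "\<exists>x y. x \<noteq> y \<and> x \<in> verts (delete_vertices G X)
      \<and> y \<in> verts (delete_vertices G X) \<and> e = {x, y}" by auto
qed

lemma subgraph_delete_vertices: "graph G \<Longrightarrow> subgraph (delete_vertices G X) G"
  unfolding subgraph_def using graph_delete_vertices by fastforce

lemma subgraph_delete_edge: "graph G \<Longrightarrow> subgraph (delete_edge G e) G"
  unfolding subgraph_def graph_def verts_delete_edge edges_delete_edge by blast

lemma subgraph_of_delete_vertices: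
  assumes "subgraph S G" "verts S \<inter> X = {}"
  shows "subgraph S (delete_vertices G X)"
proof -
  have "e \<inter> X = {}" if "e \<in> edges S" for e
    using graph_edge_subset[of S e] assms that unfolding subgraph_def by blast
  then show ?thesis
    using assms unfolding subgraph_def verts_delete_vertices edges_delete_vertices by blast
qed

lemma subgraph_of_delete_edge: "subgraph S G \<Longrightarrow> e \<notin> edges S \<Longrightarrow> subgraph S (delete_edge G e)"
  unfolding subgraph_def verts_delete_edge edges_delete_edge by blast

lemma graph_size_delete_vertices_less:
  assumes "graph G" "X \<noteq> {}" "X \<subseteq> verts G"
  shows "graph_size (delete_vertices G X) < graph_size G"
proof -
  have "finite (verts G)" using assms(1) unfolding graph_def by blast
  then have "card (verts G - X) < card (verts G)"
    using assms(2,3) by (intro psubset_card_mono) auto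
  moreover have "card {e \<in> edges G. e \<inter> X = {}} \<le> card (edges G)"
    using graph_finite_edges[OF assms(1)] by (intro card_mono) auto
  ultimately show ?thesis unfolding graph_size_def by simp
qed

lemma graph_size_delete_edge_less:
  assumes "graph G" "e \<in> edges G"
  shows "graph_size (delete_edge G e) < graph_size G"
proof -
  have "card (edges G - {e}) < card (edges G)"
    using card_Diff1_less[OF graph_finite_edges[OF assms(1)] assms(2)] .
  then show ?thesis unfolding graph_size_def by simp
qed

lemma embedding_mono:
  "embedding H G f \<Longrightarrow> subgraph G G' \<Longrightarrow> embedding H G' f"
  unfolding embedding_def subgraph_def by blast

lemma embedding_delete_vertices:
  assumes "graph H" "embedding H G f" "f ` verts H \<inter> X = {}"
  shows "embedding H (delete_vertices G X) f"
proof -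
  have "f ` e \<inter> X = {}" if "e \<in> edges H" for e
    using graph_edge_subset[OF assms(1) that] assms(3) by blast
  then show ?thesis using assms(2,3) unfolding embedding_def by simp blast
qed

lemma embedding_rtranclp_adj:
  "(adj H)\<^sup>*\<^sup>* x y \<Longrightarrow> embedding H G f \<Longrightarrow> (adj G)\<^sup>*\<^sup>* (f x) (f y)"
proof (induction rule: rtranclp_induct)
  case (step y z)
  then have "f ` {y, z} \<in> edges G" unfolding embedding_def adj_def by blast
  then have "adj G (f y) (f z)" unfolding adj_def by simp
  with step show ?case by (simp add: rtranclp.rtrancl_into_rtrancl)
qed simp

section \<open>Bad pieces avoid stable subgraphs and small-share copies\<close>

lemma component_trans: "u \<in> component G v \<Longrightarrow> component G u \<subseteq> component G v"
  unfolding component_def by (auto intro: rtranclp_trans)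

lemma component_mono: "subgraph S G \<Longrightarrow> component S v \<subseteq> component G v"
proof -
  assume S: "subgraph S G"
  then have "adj S x y \<Longrightarrow> adj G x y" for x y unfolding subgraph_def adj_def by blast
  then have "(adj S)\<^sup>*\<^sup>* v u \<Longrightarrow> (adj G)\<^sup>*\<^sup>* v u" for u by (metis mono_rtranclp)
  then show ?thesis using S unfolding component_def subgraph_def by blast
qed

lemma connected_copy_in_component:
  assumes "connected_graph H" "embedding H G f" "x \<in> verts H"
  shows "f ` verts H \<subseteq> component G (f x)"
proof
  fix z assume "z \<in> f ` verts H"
  then obtain y where y: "y \<in> verts H" "z = f y" by blast
  then have "(adj H)\<^sup>*\<^sup>* x y" using assms(1,3) unfolding connected_graph_def by blast
  then have "(adj G)\<^sup>*\<^sup>* (f x) z" using embedding_rtranclp_adj[OF _ assms(2)] y(2) by blast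
  moreover have "z \<in> verts G" using assms(2) y unfolding embedding_def by blast
  ultimately show "z \<in> component G (f x)" unfolding component_def by blast
qed

lemma bad_vertex_not_in_stable:
  assumes "bad_vertex H G v" "subgraph S G" "stable H b S"
  shows "v \<notin> verts S"
proof
  assume "v \<in> verts S"
  then obtain f where "embedding H S f" "v \<in> f ` verts H"
    using assms(3) unfolding stable_def bad_vertex_def by blast
  then show False using assms(1,2) embedding_mono unfolding bad_vertex_def by blast
qed

lemma bad_edge_not_in_stable:
  assumes "bad_edge H G e" "subgraph S G" "stable H b S"
  shows "e \<notin> edges S"
proof
  assume "e \<in> edges S"
  then obtain f where "embedding H S f" "e \<in> (\<lambda>d. f ` d) ` edges H"
    using assms(3) unfolding stable_def bad_edge_def by blast
  then show False using assms(1,2) embedding_mono unfolding bad_edge_def by blast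
qed

lemma bad_set_disjoint_stable:
  assumes bad: "bad_set H b G U" and S: "subgraph S G" "stable H b S"
  shows "verts S \<inter> U = {}"
proof (rule ccontr)
  assume meets: "verts S \<inter> U \<noteq> {}"
  have U: "2 \<le> card U" "card U \<le> b + 1"
    and no_single_hit: "\<not> (\<exists>f. embedding H G f \<and> card (f ` verts H \<inter> U) = 1)"
    using bad unfolding bad_set_def by blast+
  have "finite U" using U(1) by (simp add: card_ge_0_finite)
  have "\<exists>f. embedding H S f \<and> card (f ` verts H \<inter> (verts S \<inter> U)) = 1"
  proof (cases "card (verts S \<inter> U) = 1")
    case True
    then obtain w where w: "verts S \<inter> U = {w}" by (rule card_1_singletonE)
    then obtain f where f: "embedding H S f" "w \<in> f ` verts H"
      using S(2) unfolding stable_def bad_vertex_def by blast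
    then have "f ` verts H \<inter> (verts S \<inter> U) = {w}" using w by blast
    then show ?thesis using f(1) by (intro exI[of _ f]) simp
  next
    case False
    have "card (verts S \<inter> U) > 0" using meets \<open>finite U\<close> by (simp add: card_gt_0_iff)
    then have "2 \<le> card (verts S \<inter> U)" using False by linarith
    moreover have "card (verts S \<inter> U) \<le> b + 1"
      using card_mono[OF \<open>finite U\<close>, of "verts S \<inter> U"] U(2) by simp
    ultimately show ?thesis using S(2) unfolding stable_def bad_set_def by blast
  qed
  then obtain f where f: "embedding H S f" "card (f ` verts H \<inter> (verts S \<inter> U)) = 1"
    by blast
  moreover have "f ` verts H \<inter> (verts S \<inter> U) = f ` verts H \<inter> U"
    using f(1) unfolding embedding_def by blast
  ultimately show False using no_single_hit embedding_mono[OF f(1) S(1)] by auto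
qed

lemma small_component_disjoint_stable:
  assumes small: "small_component H b G C" and "graph G" and S: "subgraph S G" "stable H b S"
  shows "verts S \<inter> C = {}"
proof (rule ccontr)
  assume "verts S \<inter> C \<noteq> {}"
  then obtain w where w: "w \<in> verts S" "w \<in> C" by blast
  obtain v where C: "C = component G v" and card_C: "card C \<le> (b + 1) * (card (verts H) - 1)"
    using small unfolding small_component_def by blast
  have "component S w \<subseteq> C"
    using component_mono[OF S(1), of w] component_trans[of w G v] w(2) C by blast
  moreover have "finite C"
    using \<open>graph G\<close> unfolding C graph_def component_def by simp
  ultimately have "card (component S w) \<le> card (C)" by (simp add: card_mono)
  then have "small_component H b S (component S w)"
    using w(1) card_C unfolding small_component_def by (intro conjI bexI[of _ w]) simp_all
  then show False using S(2) unfolding stable_def by blast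
qed

lemma copy_avoids_bad_set:
  assumes bad: "bad_set H b G U" and f: "embedding H G f" "f ` verts H \<subseteq> M"
    and share: "card (M \<inter> U) * (b + 1) \<le> card U + b"
  shows "f ` verts H \<inter> U = {}"
proof -
  have U: "2 \<le> card U" "card U \<le> b + 1"
    and no_single_hit: "card (f ` verts H \<inter> U) \<noteq> 1"
    using bad f(1) unfolding bad_set_def by blast+
  have "finite U" using U(1) by (simp add: card_ge_0_finite)
  have "card U + b < 2 * (b + 1)" using U(2) by simp
  with share have "card (M \<inter> U) * (b + 1) < 2 * (b + 1)" by (rule le_less_trans)
  then have "card (M \<inter> U) < 2" using mult_less_cancel2 by blast
  moreover have "card (f ` verts H \<inter> U) \<le> card (M \<inter> U)"
    using f(2) \<open>finite U\<close> by (intro card_mono) auto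
  ultimately have "card (f ` verts H \<inter> U) = 0" using no_single_hit by linarith
  then show ?thesis using \<open>finite U\<close> by simp
qed

lemma copy_avoids_small_component:
  assumes "graph H" "connected_graph H" "graph G" and small: "small_component H b G C"
    and f: "embedding H G f" "f ` verts H \<subseteq> M"
    and share: "card (M \<inter> C) * (b + 1) \<le> card C + b"
  shows "f ` verts H \<inter> C = {}"
proof (rule ccontr)
  assume "f ` verts H \<inter> C \<noteq> {}"
  then obtain x where x: "x \<in> verts H" "f x \<in> C" by blast
  obtain v where C: "C = component G v" and card_C: "card C \<le> (b + 1) * (card (verts H) - 1)"
    using small unfolding small_component_def by blast
  have "finite C" using \<open>graph G\<close> unfolding C graph_def component_def by simp
  have "f ` verts H \<subseteq> C"
    using connected_copy_in_component[OF assms(2) f(1) x(1)] component_trans[of "f x" G v] x(2) C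
    by blast
  then have "card (f ` verts H) \<le> card (M \<inter> C)"
    using f(2) \<open>finite C\<close> by (intro card_mono) auto
  moreover have "card (f ` verts H) = card (verts H)"
    using f(1) unfolding embedding_def by (simp add: card_image)
  moreover have "card (verts H) > 0"
    using assms(1,2) unfolding graph_def connected_graph_def by (simp add: card_gt_0_iff)
  ultimately have "card (verts H) \<le> card (M \<inter> C)" by simp
  then have "card (verts H) * (b + 1) \<le> card (M \<inter> C) * (b + 1)" by (rule mult_le_mono1)
  also have "\<dots> \<le> card C + b" by (rule share)
  also have "\<dots> \<le> (card (verts H) - 1) * (b + 1) + b" using card_C by (simp add: mult.commute)
  finally have "card (verts H) * (b + 1) \<le> (card (verts H) - 1) * (b + 1) + b" .
  then show False using \<open>card (verts H) > 0\<close> by (cases "card (verts H)") simp_all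
qed

lemma safe_removal_delete_vertices:
  assumes "graph H" "X \<subseteq> verts G"
    and avoid: "\<And>M f. embedding H G f \<Longrightarrow> f ` verts H \<subseteq> M
      \<Longrightarrow> card (M \<inter> X) * (b + 1) \<le> card X + b \<Longrightarrow> f ` verts H \<inter> X = {}"
  shows "safe_removal H b G X (delete_vertices G X)"
  unfolding safe_removal_def
proof (intro conjI allI impI)
  fix M assume share: "card (M \<inter> X) * (b + 1) \<le> card X + b" and "has_copy_in H G M"
  then obtain f where f: "embedding H G f" "f ` verts H \<subseteq> M" unfolding has_copy_in_def by blast
  then have disj: "f ` verts H \<inter> X = {}" using avoid share by blast
  have "f ` verts H \<subseteq> M \<inter> verts (delete_vertices G X)"
    using f disj unfolding embedding_def verts_delete_vertices by blast
  then show "has_copy_in H (delete_vertices G X) (M \<inter> verts (delete_vertices G X))"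
    using embedding_delete_vertices[OF assms(1) f(1) disj] unfolding has_copy_in_def by blast
qed (use assms(2) in simp_all)

lemma safe_removal_delete_bad_edge:
  assumes "bad_edge H G e"
  shows "safe_removal H b G {} (delete_edge G e)"
  unfolding safe_removal_def
proof (intro conjI allI impI)
  fix M assume "has_copy_in H G M"
  then obtain f where f: "embedding H G f" "f ` verts H \<subseteq> M" unfolding has_copy_in_def by blast
  then have "f ` d \<noteq> e" if "d \<in> edges H" for d
    using assms that unfolding bad_edge_def by blast
  then have "embedding H (delete_edge G e) f" using f(1) unfolding embedding_def by simp
  moreover have "f ` verts H \<subseteq> M \<inter> verts (delete_edge G e)"
    using f unfolding embedding_def by simp
  ultimately show "has_copy_in H (delete_edge G e) (M \<inter> verts (delete_edge G e))"
    unfolding has_copy_in_def by blast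
qed simp_all

section \<open>Peeling a graph down to its core\<close>

text \<open>Keeping every stable subgraph of G keeps the core of G.\<close>

definition reduces_to :: "'b graph \<Rightarrow> nat \<Rightarrow> 'a graph \<Rightarrow> 'a graph \<Rightarrow> bool" where
  "reduces_to H b G G' \<longleftrightarrow> (\<exists>X. safe_removal H b G X G') \<and> subgraph G' G
     \<and> graph_size G' < graph_size G \<and> (\<forall>S. subgraph S G \<longrightarrow> stable H b S \<longrightarrow> subgraph S G')"

lemma reduces_to_delete_vertices:
  assumes "graph H" "graph G" "X \<noteq> {}" "X \<subseteq> verts G"
    and "\<And>S. subgraph S G \<Longrightarrow> stable H b S \<Longrightarrow> verts S \<inter> X = {}"
    and "\<And>M f. embedding H G f \<Longrightarrow> f ` verts H \<subseteq> M
      \<Longrightarrow> card (M \<inter> X) * (b + 1) \<le> card X + b \<Longrightarrow> f ` verts H \<inter> X = {}"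
  shows "reduces_to H b G (delete_vertices G X)"
  unfolding reduces_to_def
proof (intro conjI allI impI exI)
  show "safe_removal H b G X (delete_vertices G X)"
    using safe_removal_delete_vertices[OF assms(1,4,6)] .
  show "subgraph (delete_vertices G X) G" using subgraph_delete_vertices[OF assms(2)] .
  show "graph_size (delete_vertices G X) < graph_size G"
    using graph_size_delete_vertices_less[OF assms(2-4)] .
  show "subgraph S (delete_vertices G X)" if "subgraph S G" "stable H b S" for S
    using subgraph_of_delete_vertices[OF that(1) assms(5)[OF that]] .
qed

lemma reduces_to_delete_bad_edge:
  assumes "graph G" "bad_edge H G e"
  shows "reduces_to H b G (delete_edge G e)"
proof -
  have "e \<in> edges G" using assms(2) unfolding bad_edge_def by blast
  then show ?thesis
    unfolding reduces_to_def
  proof (intro conjI allI impI exI)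
    show "safe_removal H b G {} (delete_edge G e)"
      using safe_removal_delete_bad_edge[OF assms(2)] .
    show "subgraph (delete_edge G e) G" using subgraph_delete_edge[OF assms(1)] .
    show "graph_size (delete_edge G e) < graph_size G"
      using graph_size_delete_edge_less[OF assms(1) \<open>e \<in> edges G\<close>] .
    show "subgraph S (delete_edge G e)" if "subgraph S G" "stable H b S" for S
      using subgraph_of_delete_edge[OF that(1) bad_edge_not_in_stable[OF assms(2) that]] .
  qed
qed

lemma unstable_reduces:
  assumes "graph H" "connected_graph H" "graph G" "\<not> stable H b G"
  shows "\<exists>G'. reduces_to H b G G'"
proof -
  consider (vertex) v where "bad_vertex H G v" | (edge) e where "bad_edge H G e"
    | (set) U where "bad_set H b G U" | (component) C where "small_component H b G C"
    using assms(4) unfolding stable_def by blast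
  then show ?thesis
  proof cases
    case vertex
    then have "v \<in> verts G" "\<And>f. embedding H G f \<Longrightarrow> v \<notin> f ` verts H"
      unfolding bad_vertex_def by blast+
    then have "reduces_to H b G (delete_vertices G {v})"
      using bad_vertex_not_in_stable[OF vertex]
      by (intro reduces_to_delete_vertices[OF assms(1,3)]) blast+
    then show ?thesis ..
  next
    case edge
    then show ?thesis using reduces_to_delete_bad_edge[OF assms(3)] by blast
  next
    case set
    then have "U \<subseteq> verts G" "2 \<le> card U" unfolding bad_set_def by blast+
    then have "U \<noteq> {}" "U \<subseteq> verts G" by auto
    then have "reduces_to H b G (delete_vertices G U)"
      using bad_set_disjoint_stable[OF set] copy_avoids_bad_set[OF set]
      by (intro reduces_to_delete_vertices[OF assms(1,3)]) blast+
    then show ?thesis ..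
  next
    case component
    then obtain v where "v \<in> verts G" "C = component G v" unfolding small_component_def by blast
    then have "v \<in> C" "C \<subseteq> verts G" unfolding component_def by blast+
    then have "reduces_to H b G (delete_vertices G C)"
      using small_component_disjoint_stable[OF component assms(3)]
        copy_avoids_small_component[OF assms(1-3) component]
      by (intro reduces_to_delete_vertices[OF assms(1,3)]) blast+
    then show ?thesis ..
  qed
qed

lemma verts_core:
  "verts (core H b G) = \<Union>{verts S | S. subgraph S G \<and> stable H b S}"
  by (simp add: core_def verts_def)

lemma edges_core:
  "edges (core H b G) = \<Union>{edges S | S. subgraph S G \<and> stable H b S}"
  by (simp add: core_def edges_def)

lemma core_eq:
  assumes "subgraph K G" "stable H b K" "\<And>S. subgraph S G \<Longrightarrow> stable H b S \<Longrightarrow> subgraph S K"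
  shows "core H b G = K"
proof -
  have "verts (core H b G) = verts K" "edges (core H b G) = edges K"
    unfolding verts_core edges_core using assms unfolding subgraph_def by blast+
  then show ?thesis unfolding verts_def edges_def by (simp add: prod_eq_iff)
qed

lemma wins_transfer_core:
  assumes "graph H" "connected_graph H" "b \<ge> 1"
  shows "subgraph G' G \<Longrightarrow> (\<And>S. subgraph S G \<Longrightarrow> stable H b S \<Longrightarrow> subgraph S G')
    \<Longrightarrow> wins_transfer H b (core H b G) G'"
proof (induction "graph_size G'" arbitrary: G' rule: less_induct)
  case less
  have "graph G'" using less.prems(1) unfolding subgraph_def by blast
  show ?case
  proof (cases "stable H b G'")
    case True
    then show ?thesis using core_eq[OF less.prems(1) True] less.prems(2)
      unfolding wins_transfer_def by simp
  next
    case False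
    then obtain G'' X where G'': "safe_removal H b G' X G''" "subgraph G'' G'"
      "graph_size G'' < graph_size G'" "\<And>S. subgraph S G' \<Longrightarrow> stable H b S \<Longrightarrow> subgraph S G''"
      using unstable_reduces[OF assms(1,2) \<open>graph G'\<close>] unfolding reduces_to_def by blast
    have "subgraph S G''" if "subgraph S G" "stable H b S" for S
      using G''(4) less.prems(2)[OF that] that(2) by blast
    then have "wins_transfer H b (core H b G) G''"
      using less.hyps[OF G''(3) subgraph_trans[OF G''(2) less.prems(1)]] by blast
    moreover have "wins_transfer H b G'' G'"
      using wins_transfer_safe_removal[OF G''(1) _ assms(3)] \<open>graph G'\<close>
      unfolding graph_def by blast
    ultimately show ?thesis unfolding wins_transfer_def by blast
  qed
qed

theorem mainTheorem12:
  fixes G :: "'a graph" and H :: "'b graph" and b :: nat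
  assumes "graph G" and "graph H" and "connected_graph H" and "b \<ge> 1"
  shows "(\<forall>maker_first. MB_breaker_wins H b (core H b G) maker_first
              \<longrightarrow> MB_breaker_wins H b G maker_first)
       \<and> (CW_waiter_wins H b (core H b G) \<longrightarrow> CW_waiter_wins H b G)"
  using wins_transfer_core[OF assms(2-4) subgraph_refl[OF assms(1)]]
  unfolding wins_transfer_def by blast

end
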